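(* The path collection $\mathcal{P}_{light}=\{\Pi_{\langle x,y\rangle}:\langle x,y\rangle\text{ is an ordered light pair}\}$ satisfies: every path in $\mathcal{P}_{light}$ has length $O(D)$, and every edge of $G$ appears in at most $\widetilde{O}(D)$ paths of $\mathcal{P}_{light}$.
   Context: $G=(V,E)$ is a connected $n$-vertex graph of diameter $D$ with no cut vertex, $T$ a BFS tree rooted at $s$, $\pi(u,v)$ the $T$-path, $T_x$ the subtree at $x$, $V_x=V(T_x)\setminus\{x\}$; $\widetilde{O}$ hides polylog$(n)$ factors. The heavy child $x_h$ of a non-leaf $x$ is the child with largest subtree (ties broken consistently); other children and their edges to $x$ are light. $\mathcal{C}_x$ is the set of components of $G[V_x]$, $C_{x,v}$ the one containing $v$; for each $C\in\mathcal{C}_x$ a fixed edge $(u_C,v_C)\in E$ with $v_C\in C$, $u_C\notin V(T_x)$, and $\pi_x(s,C)=\pi(s,u_C)\circ(u_C,v_C)$. $x,y$ is independent if neither is a $T$-ancestor of the other. For independent $x,y$, $C\in\mathcal{C}_x$ is fully-$y$-sensitive if $y\in\pi_x(s,C)$ and $\pi_x(s,C)$ contains no $T$-edge $(y,y')$ with $x\notin\pi_y(s,C_{y,y'})$; $\mathcal{FS}(x,y)$ is the set of such components. An ordered independent pair $\langle x,y\rangle$ is an ordered light pair if there is $C\in\mathcal{FS}(x,y)$ with $(y,y_h)\notin\pi_x(s,C)$. For each ordered light pair choose arbitrarily such a component $C^{\langle x,y\rangle}$ and let $\Pi_{\langle x,y\rangle}=\pi(x,v_{C^{\langle x,y\rangle}})\circ(v_{C^{\langle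 x,y\rangle}},u_{C^{\langle x,y\rangle}})\circ\pi(u_{C^{\langle x,y\rangle}},y)$. *)

theory Defs
  imports Complex_Main
begin

definition graph :: "'a set \<Rightarrow> 'a set set \<Rightarrow> bool" where
  "graph V E \<longleftrightarrow> finite V \<and> E \<subseteq> {{u, v} | u v. u \<in> V \<and> v \<in> V \<and> u \<noteq> v}"

definition walk :: "'a set set \<Rightarrow> 'a list \<Rightarrow> bool" where
  "walk E p \<longleftrightarrow> p \<noteq> [] \<and> (\<forall>i. Suc i < length p \<longrightarrow> {p ! i, p ! Suc i} \<in> E)"

definition conn_in :: "'a set set \<Rightarrow> 'a set \<Rightarrow> 'a \<Rightarrow> 'a \<Rightarrow> bool" where
  "conn_in E S u v \<longleftrightarrow> (\<exists>p. walk E p \<and> hd p = u \<and> last p = v \<and> set p \<subseteq> S)"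

definition connected_graph :: "'a set \<Rightarrow> 'a set set \<Rightarrow> bool" where
  "connected_graph V E \<longleftrightarrow> (\<forall>u\<in>V. \<forall>v\<in>V. conn_in E V u v)"

definition no_cut_vertex :: "'a set \<Rightarrow> 'a set set \<Rightarrow> bool" where
  "no_cut_vertex V E \<longleftrightarrow> (\<forall>w\<in>V. \<forall>u\<in>V - {w}. \<forall>v\<in>V - {w}. conn_in E (V - {w}) u v)"

definition gdist :: "'a set set \<Rightarrow> 'a \<Rightarrow> 'a \<Rightarrow> nat" where
  "gdist E u v = (LEAST n. \<exists>p. walk E p \<and> hd p = u \<and> last p = v \<and> length p = Suc n)"

definition diameter :: "'a set \<Rightarrow> 'a set set \<Rightarrow> nat" where
  "diameter V E = Max {gdist E u v | u v. u \<in> V \<and> v \<in> V}"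

definition edges_of :: "'a list \<Rightarrow> 'a set set" where
  "edges_of p = {{p ! i, p ! Suc i} | i. Suc i < length p}"

definition bfs_tree :: "'a set \<Rightarrow> 'a set set \<Rightarrow> 'a \<Rightarrow> ('a \<Rightarrow> 'a) \<Rightarrow> bool" where
  "bfs_tree V E s par \<longleftrightarrow> s \<in> V \<and>
     (\<forall>v\<in>V - {s}. par v \<in> V \<and> {v, par v} \<in> E \<and> gdist E s v = Suc (gdist E s (par v)))"

definition rootpath :: "'a set set \<Rightarrow> 'a \<Rightarrow> ('a \<Rightarrow> 'a) \<Rightarrow> 'a \<Rightarrow> 'a list" where
  "rootpath E s par v = map (\<lambda>i. (par ^^ i) v) [0..<Suc (gdist E s v)]"

definition tanc :: "'a set set \<Rightarrow> 'a \<Rightarrow> ('a \<Rightarrow> 'a) \<Rightarrow> 'a \<Rightarrow> 'a \<Rightarrow> bool" where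
  "tanc E s par x v \<longleftrightarrow> x \<in> set (rootpath E s par v)"

definition independent :: "'a set set \<Rightarrow> 'a \<Rightarrow> ('a \<Rightarrow> 'a) \<Rightarrow> 'a \<Rightarrow> 'a \<Rightarrow> bool" where
  "independent E s par x y \<longleftrightarrow> \<not> tanc E s par x y \<and> \<not> tanc E s par y x"

definition lca :: "'a set set \<Rightarrow> 'a \<Rightarrow> ('a \<Rightarrow> 'a) \<Rightarrow> 'a \<Rightarrow> 'a \<Rightarrow> 'a" where
  "lca E s par u v = (THE w. w \<in> set (rootpath E s par u) \<inter> set (rootpath E s par v) \<and>
      (\<forall>w' \<in> set (rootpath E s par u) \<inter> set (rootpath E s par v). gdist E s w' \<le> gdist E s w))"

text \<open>The T-path pi(u,v), as the vertex list u, ..., lca(u,v), ..., v.\<close>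
definition tpath :: "'a set set \<Rightarrow> 'a \<Rightarrow> ('a \<Rightarrow> 'a) \<Rightarrow> 'a \<Rightarrow> 'a \<Rightarrow> 'a list" where
  "tpath E s par u v =
     (let w = lca E s par u v
      in take (gdist E s u - gdist E s w + 1) (rootpath E s par u) @
         tl (rev (take (gdist E s v - gdist E s w + 1) (rootpath E s par v))))"

definition subtree :: "'a set \<Rightarrow> 'a set set \<Rightarrow> 'a \<Rightarrow> ('a \<Rightarrow> 'a) \<Rightarrow> 'a \<Rightarrow> 'a set" where
  "subtree V E s par x = {v \<in> V. tanc E s par x v}"

definition strict_subtree :: "'a set \<Rightarrow> 'a set set \<Rightarrow> 'a \<Rightarrow> ('a \<Rightarrow> 'a) \<Rightarrow> 'a \<Rightarrow> 'a set" where
  "strict_subtree V E s par x = subtree V E s par x - {x}"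

definition children :: "'a set \<Rightarrow> 'a \<Rightarrow> ('a \<Rightarrow> 'a) \<Rightarrow> 'a \<Rightarrow> 'a set" where
  "children V s par x = {c \<in> V - {s}. par c = x}"

definition heavy_child_fun :: "'a set \<Rightarrow> 'a set set \<Rightarrow> 'a \<Rightarrow> ('a \<Rightarrow> 'a) \<Rightarrow> ('a \<Rightarrow> 'a) \<Rightarrow> bool" where
  "heavy_child_fun V E s par h \<longleftrightarrow>
     (\<forall>x\<in>V. children V s par x \<noteq> {} \<longrightarrow>
        h x \<in> children V s par x \<and>
        (\<forall>c\<in>children V s par x. card (subtree V E s par c) \<le> card (subtree V E s par (h x))))"

definition comp_of :: "'a set \<Rightarrow> 'a set set \<Rightarrow> 'a \<Rightarrow> ('a \<Rightarrow> 'a) \<Rightarrow> 'a \<Rightarrow> 'a \<Rightarrow> 'a set" where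
  "comp_of V E s par x v = {w. conn_in E (strict_subtree V E s par x) v w}"

definition comps :: "'a set \<Rightarrow> 'a set set \<Rightarrow> 'a \<Rightarrow> ('a \<Rightarrow> 'a) \<Rightarrow> 'a \<Rightarrow> 'a set set" where
  "comps V E s par x = {comp_of V E s par x v | v. v \<in> strict_subtree V E s par x}"

definition comp_edges :: "'a set \<Rightarrow> 'a set set \<Rightarrow> 'a \<Rightarrow> ('a \<Rightarrow> 'a) \<Rightarrow>
    ('a \<Rightarrow> 'a set \<Rightarrow> 'a) \<Rightarrow> ('a \<Rightarrow> 'a set \<Rightarrow> 'a) \<Rightarrow> bool" where
  "comp_edges V E s par uC vC \<longleftrightarrow>
     (\<forall>x\<in>V - {s}. \<forall>C\<in>comps V E s par x.
        {uC x C, vC x C} \<in> E \<and> vC x C \<in> C \<and> uC x C \<in> V - subtree V E s par x)"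

definition piC :: "'a set set \<Rightarrow> 'a \<Rightarrow> ('a \<Rightarrow> 'a) \<Rightarrow> ('a \<Rightarrow> 'a set \<Rightarrow> 'a) \<Rightarrow> ('a \<Rightarrow> 'a set \<Rightarrow> 'a) \<Rightarrow>
    'a \<Rightarrow> 'a set \<Rightarrow> 'a list" where
  "piC E s par uC vC x C = tpath E s par s (uC x C) @ [vC x C]"

definition fully_sensitive :: "'a set \<Rightarrow> 'a set set \<Rightarrow> 'a \<Rightarrow> ('a \<Rightarrow> 'a) \<Rightarrow>
    ('a \<Rightarrow> 'a set \<Rightarrow> 'a) \<Rightarrow> ('a \<Rightarrow> 'a set \<Rightarrow> 'a) \<Rightarrow> 'a \<Rightarrow> 'a \<Rightarrow> 'a set \<Rightarrow> bool" where
  "fully_sensitive V E s par uC vC x y C \<longleftrightarrow>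
     C \<in> comps V E s par x \<and>
     y \<in> set (piC E s par uC vC x C) \<and>
     \<not> (\<exists>y'\<in>children V s par y. {y, y'} \<in> edges_of (piC E s par uC vC x C) \<and>
            x \<notin> set (piC E s par uC vC y (comp_of V E s par y y')))"

definition heavy_edge_on :: "'a set \<Rightarrow> 'a \<Rightarrow> ('a \<Rightarrow> 'a) \<Rightarrow> ('a \<Rightarrow> 'a) \<Rightarrow> 'a \<Rightarrow> 'a list \<Rightarrow> bool" where
  "heavy_edge_on V s par h y p \<longleftrightarrow> children V s par y \<noteq> {} \<and> {y, h y} \<in> edges_of p"

definition ordered_light_pair :: "'a set \<Rightarrow> 'a set set \<Rightarrow> 'a \<Rightarrow> ('a \<Rightarrow> 'a) \<Rightarrow> ('a \<Rightarrow> 'a) \<Rightarrow>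
    ('a \<Rightarrow> 'a set \<Rightarrow> 'a) \<Rightarrow> ('a \<Rightarrow> 'a set \<Rightarrow> 'a) \<Rightarrow> 'a \<Rightarrow> 'a \<Rightarrow> bool" where
  "ordered_light_pair V E s par h uC vC x y \<longleftrightarrow>
     x \<in> V \<and> y \<in> V \<and> independent E s par x y \<and>
     (\<exists>C. fully_sensitive V E s par uC vC x y C \<and>
          \<not> heavy_edge_on V s par h y (piC E s par uC vC x C))"

definition light_choice :: "'a set \<Rightarrow> 'a set set \<Rightarrow> 'a \<Rightarrow> ('a \<Rightarrow> 'a) \<Rightarrow> ('a \<Rightarrow> 'a) \<Rightarrow>
    ('a \<Rightarrow> 'a set \<Rightarrow> 'a) \<Rightarrow> ('a \<Rightarrow> 'a set \<Rightarrow> 'a) \<Rightarrow> ('a \<Rightarrow> 'a \<Rightarrow> 'a set) \<Rightarrow> bool" where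
  "light_choice V E s par h uC vC Csel \<longleftrightarrow>
     (\<forall>x y. ordered_light_pair V E s par h uC vC x y \<longrightarrow>
        fully_sensitive V E s par uC vC x y (Csel x y) \<and>
        \<not> heavy_edge_on V s par h y (piC E s par uC vC x (Csel x y)))"

text \<open>Pi_<x,y> = pi(x, v_C) o (v_C, u_C) o pi(u_C, y), as a vertex list.\<close>
definition light_path :: "'a set set \<Rightarrow> 'a \<Rightarrow> ('a \<Rightarrow> 'a) \<Rightarrow> ('a \<Rightarrow> 'a set \<Rightarrow> 'a) \<Rightarrow>
    ('a \<Rightarrow> 'a set \<Rightarrow> 'a) \<Rightarrow> ('a \<Rightarrow> 'a \<Rightarrow> 'a set) \<Rightarrow> 'a \<Rightarrow> 'a \<Rightarrow> 'a list" where
  "light_path E s par uC vC Csel x y =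
     (let C = Csel x y in tpath E s par x (vC x C) @ tpath E s par (uC x C) y)"

end

theory Submission
  imports Defs
begin

text \<open>
  Pi<x,y> is made of two tree paths, each from a vertex to one of its ancestors, and one edge,
  so its length is O(D). For the congestion bound, let a be an endpoint of an edge of Pi<x,y>
  and C = C^<x,y>. If the edge lies on pi(x, v_C) o (v_C, u_C), then a is in C, so x is one of
  the at most D + 1 ancestors of a and C = C_{x,a} determines u_C; since the edge of pi_x(s, C)
  leaving y downwards is not heavy, y is u_C or one of the at most log n light ancestors of u_C.
  If the edge lies on pi(u_C, y), then y is a light ancestor of a, and full y-sensitivity of C
  puts x on pi_y(s, C_{y,y'}) for the child y' of y towards a, a path with at most D + 2
  vertices. So each endpoint of an edge accounts for O(D log n) pairs.
\<close>

lemma card_doublings_le: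
  fixes f :: "nat \<Rightarrow> nat"
  assumes "\<And>j. j < m \<Longrightarrow> f j \<le> f (Suc j)"
  shows "2 ^ card {j. j < m \<and> 2 * f j < f (Suc j)} * f 0 \<le> f m"
  using assms
proof (induction m)
  case 0
  then show ?case by simp
next
  case (Suc m)
  let ?J = "\<lambda>m. {j. j < m \<and> 2 * f j < f (Suc j)}"
  have IH: "2 ^ card (?J m) * f 0 \<le> f m"
    using Suc by simp
  show ?case
  proof (cases "2 * f m < f (Suc m)")
    case True
    then have "?J (Suc m) = insert m (?J m)"
      by auto
    then show ?thesis
      using IH True by simp
  next
    case False
    then have "?J (Suc m) = ?J m"
      using less_Suc_eq by auto
    then show ?thesis
      using IH Suc.prems[of m] by simp
  qed
qed

lemma card_UN_le_mult:
  assumes "finite I" and "\<And>i. i \<in> I \<Longrightarrow> real (card (F i)) \<le> b"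
  shows "real (card (\<Union>i\<in>I. F i)) \<le> real (card I) * b"
proof -
  have "real (card (\<Union>i\<in>I. F i)) \<le> (\<Sum>i\<in>I. real (card (F i)))"
    using card_UN_le[OF assms(1), of F] by (simp flip: of_nat_sum)
  also have "\<dots> \<le> real (card I) * b"
    using assms(2) by (rule sum_bounded_above)
  finally show ?thesis .
qed

lemma edges_of_rev [simp]: "edges_of (rev xs) = edges_of xs"
proof -
  have "edges_of (rev xs) \<subseteq> edges_of xs" for xs :: "'a list"
  proof
    fix e assume "e \<in> edges_of (rev xs)"
    then obtain i where i: "Suc i < length xs" "e = {rev xs ! i, rev xs ! Suc i}"
      unfolding edges_of_def by auto
    define j where "j = length xs - Suc (Suc i)"
    have "Suc j < length xs" "rev xs ! i = xs ! Suc j" "rev xs ! Suc i = xs ! j"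
      using i unfolding j_def by (auto simp: rev_nth Suc_diff_Suc)
    then show "e \<in> edges_of xs"
      unfolding edges_of_def using i by (auto simp: insert_commute)
  qed
  from this[of xs] this[of "rev xs"] show ?thesis by simp
qed

lemma edges_of_append_left: "edges_of xs \<subseteq> edges_of (xs @ ys)"
  unfolding edges_of_def by (force simp: nth_append)

lemma edges_of_appendE:
  assumes "e \<in> edges_of (xs @ ys)" and "xs \<noteq> []" and "ys \<noteq> []"
  obtains "e \<in> edges_of xs" | "e \<in> edges_of ys" | "e = {last xs, hd ys}"
proof -
  obtain i where i: "Suc i < length xs + length ys" "e = {(xs @ ys) ! i, (xs @ ys) ! Suc i}"
    using assms(1) unfolding edges_of_def by auto
  consider "Suc i < length xs" | "Suc i = length xs" | "length xs \<le> i"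
    by linarith
  then show thesis
  proof cases
    case 1
    then show thesis
      using i that(1) unfolding edges_of_def by (auto simp: nth_append)
  next
    case 2
    then have "i = length xs - 1"
      by simp
    then have "e = {last xs, hd ys}"
      using i assms(2,3) by (auto simp: nth_append last_conv_nth hd_conv_nth)
    then show thesis
      by (rule that(3))
  next
    case 3
    then have "Suc (i - length xs) < length ys" "(xs @ ys) ! i = ys ! (i - length xs)"
      "(xs @ ys) ! Suc i = ys ! Suc (i - length xs)"
      using i by (auto simp: nth_append Suc_diff_le)
    then show thesis
      using i that(2) unfolding edges_of_def by auto
  qed
qed

lemma edges_of_map_upt: "edges_of (map f [0..<Suc m]) = {{f i, f (Suc i)} | i. i < m}"
  unfolding edges_of_def by (intro Collect_cong ex_cong1) (auto simp del: upt_Suc)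

lemma walk_iff_edges_of: "walk E p \<longleftrightarrow> p \<noteq> [] \<and> edges_of p \<subseteq> E"
  unfolding walk_def edges_of_def by blast

lemma walk_rev: "walk E p \<Longrightarrow> walk E (rev p)"
  by (simp add: walk_iff_edges_of)

lemma walk_append: "walk E p \<Longrightarrow> walk E q \<Longrightarrow> {last p, hd q} \<in> E \<Longrightarrow> walk E (p @ q)"
  unfolding walk_iff_edges_of by (blast elim: edges_of_appendE)

lemma conn_in_sym: "conn_in E S u v \<Longrightarrow> conn_in E S v u"
  unfolding conn_in_def by (metis walk_rev hd_rev last_rev set_rev)

lemma conn_in_trans:
  assumes "conn_in E S u v" and "conn_in E S v w"
  shows "conn_in E S u w"
proof -
  obtain p where p: "walk E p" "hd p = u" "last p = v" "set p \<subseteq> S"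
    using assms(1) unfolding conn_in_def by blast
  obtain q where q: "walk E q" "hd q = v" "last q = w" "set q \<subseteq> S"
    using assms(2) unfolding conn_in_def by blast
  show ?thesis
  proof (cases "tl q = []")
    case True
    then have "q = [v]"
      using q by (cases q) (auto simp: walk_def)
    then show ?thesis
      using p q unfolding conn_in_def by auto
  next
    case False
    then obtain r where qr: "q = v # r" "r \<noteq> []"
      using q(1,2) unfolding walk_def by (cases q) auto
    have "walk E r" "{last p, hd r} \<in> E"
      using q(1) p(3) qr unfolding walk_def by (auto simp: hd_conv_nth)
    then have "walk E (p @ r)"
      using walk_append p(1) by blast
    then show ?thesis
      unfolding conn_in_def using p q qr by (intro exI[of _ "p @ r"]) (auto simp: walk_def)
  qed
qed

lemma conn_in_same_component:
  assumes "conn_in E S a b"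
  shows "{w. conn_in E S a w} = {w. conn_in E S b w}"
  using conn_in_trans[OF assms] conn_in_trans[OF conn_in_sym[OF assms]] by blast

lemma comp_of_in_comps: "w \<in> strict_subtree V E s par x \<Longrightarrow> comp_of V E s par x w \<in> comps V E s par x"
  unfolding comps_def by blast

lemma comps_eq_comp_of:
  assumes C: "C \<in> comps V E s par x" and z: "z \<in> C"
  shows "z \<in> strict_subtree V E s par x" "C = comp_of V E s par x z"
proof -
  obtain w where w: "C = comp_of V E s par x w"
    using C unfolding comps_def by blast
  then have wz: "conn_in E (strict_subtree V E s par x) w z"
    using z unfolding comp_of_def by simp
  then show "z \<in> strict_subtree V E s par x"
    unfolding conn_in_def walk_def by (metis last_in_set subsetD)
  show "C = comp_of V E s par x z"
    using w conn_in_same_component[OF wz] unfolding comp_of_def by simp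
qed

locale bfs_setting =
  fixes V :: "'a set" and E :: "'a set set" and s :: 'a and par :: "'a \<Rightarrow> 'a"
  assumes graph: "graph V E" and connected: "connected_graph V E" and bfs: "bfs_tree V E s par"
begin

abbreviation depth :: "'a \<Rightarrow> nat" where
  "depth \<equiv> gdist E s"

lemma finite_V: "finite V"
  using graph unfolding graph_def by simp

lemma root_in_V: "s \<in> V"
  using bfs unfolding bfs_tree_def by simp

lemma bfs_parent: "v \<in> V \<Longrightarrow> v \<noteq> s \<Longrightarrow> par v \<in> V \<and> {v, par v} \<in> E \<and> depth v = Suc (depth (par v))"
  using bfs unfolding bfs_tree_def by blast

lemma depth_root [simp]: "depth s = 0"
proof -
  have "walk E [s]"
    unfolding walk_def by simp
  then show ?thesis
    unfolding gdist_def by (intro Least_eq_0 exI[of _ "[s]"]) simp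
qed

lemma depth_eq_0_iff: "v \<in> V \<Longrightarrow> depth v = 0 \<longleftrightarrow> v = s"
proof
  assume v: "v \<in> V" and "depth v = 0"
  obtain p where "walk E p" "hd p = s" "last p = v"
    using connected v root_in_V unfolding connected_graph_def conn_in_def by blast
  moreover obtain n where "length p = Suc n"
    using \<open>walk E p\<close> unfolding walk_def by (cases p) auto
  ultimately have "\<exists>n p. walk E p \<and> hd p = s \<and> last p = v \<and> length p = Suc n"
    by blast
  from LeastI_ex[OF this] obtain q where "hd q = s" "last q = v" "length q = Suc (depth v)"
    unfolding gdist_def by blast
  then show "v = s"
    using \<open>depth v = 0\<close> by (cases q) auto
qed simp

lemma funpow_par:
  "v \<in> V \<Longrightarrow> i \<le> depth v \<Longrightarrow> (par ^^ i) v \<in> V \<and> depth ((par ^^ i) v) = depth v - i"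
proof (induction i)
  case (Suc i)
  then have w: "(par ^^ i) v \<in> V" "depth ((par ^^ i) v) = depth v - i"
    by auto
  then have "(par ^^ i) v \<noteq> s"
    using Suc.prems by (metis Suc_le_eq zero_less_diff less_irrefl depth_root)
  then show ?case
    using bfs_parent[OF w(1)] w by auto
qed simp

lemma funpow_par_neq_root: "v \<in> V \<Longrightarrow> i < depth v \<Longrightarrow> (par ^^ i) v \<noteq> s"
  using funpow_par[of v i] by (metis depth_root diff_is_0_eq leD less_imp_le_nat)

lemma depth_le_diameter: "v \<in> V \<Longrightarrow> depth v \<le> diameter V E"
proof -
  assume v: "v \<in> V"
  have "{gdist E u w | u w. u \<in> V \<and> w \<in> V} = (\<lambda>(u, w). gdist E u w) ` (V \<times> V)"
    by auto
  then have "finite {gdist E u w | u w. u \<in> V \<and> w \<in> V}"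
    using finite_V by simp
  then show ?thesis
    unfolding diameter_def using v root_in_V by (intro Max_ge) auto
qed

lemma length_rootpath: "length (rootpath E s par v) = Suc (depth v)"
  unfolding rootpath_def by simp

lemma set_rootpath: "set (rootpath E s par v) = (\<lambda>i. (par ^^ i) v) ` {..depth v}"
  unfolding rootpath_def by (simp only: set_map set_upt atLeast0LessThan lessThan_Suc_atMost)

lemma tanc_iff: "tanc E s par x v \<longleftrightarrow> (\<exists>i\<le>depth v. x = (par ^^ i) v)"
  unfolding tanc_def set_rootpath by auto

lemma tancD:
  assumes "v \<in> V" and "tanc E s par x v"
  shows "x \<in> V" "depth x \<le> depth v" "x = (par ^^ (depth v - depth x)) v"
proof -
  obtain i where i: "i \<le> depth v" "x = (par ^^ i) v"
    using assms(2) tanc_iff by auto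
  with funpow_par[OF assms(1) i(1)] show "x \<in> V" "depth x \<le> depth v" "x = (par ^^ (depth v - depth x)) v"
    by auto
qed

lemma tanc_refl: "tanc E s par v v"
  unfolding tanc_iff by (metis funpow_0 le0)

lemma tanc_root: "v \<in> V \<Longrightarrow> tanc E s par s v"
  unfolding tanc_iff using funpow_par[of v "depth v"] depth_eq_0_iff by force

lemma tanc_par: "v \<in> V \<Longrightarrow> v \<noteq> s \<Longrightarrow> tanc E s par (par v) v"
  unfolding tanc_iff using depth_eq_0_iff[of v] by (intro exI[of _ 1]) auto

lemma tanc_trans:
  assumes "v \<in> V" and "tanc E s par x v" and "tanc E s par y x"
  shows "tanc E s par y v"
proof -
  obtain i where i: "i \<le> depth v" "x = (par ^^ i) v"
    using assms(2) tanc_iff by auto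
  obtain j where j: "j \<le> depth x" "y = (par ^^ j) x"
    using assms(3) tanc_iff by auto
  have "y = (par ^^ (j + i)) v" "j + i \<le> depth v"
    using i j funpow_par[OF assms(1) i(1)] by (auto simp: funpow_add)
  then show ?thesis
    unfolding tanc_iff by blast
qed

lemma depth_less_if_proper_tanc:
  assumes "v \<in> V" and "tanc E s par x v" and "x \<noteq> v"
  shows "depth x < depth v"
  using tancD[OF assms(1,2)] assms(3) by (metis diff_is_0_eq funpow_0 le_neq_implies_less)

lemma lca_of_tanc:
  assumes v: "v \<in> V" and a: "tanc E s par x v"
  shows "lca E s par x v = x" "lca E s par v x = x"
proof -
  have x: "x \<in> V"
    using tancD[OF v a] by simp
  have common: "set (rootpath E s par x) \<inter> set (rootpath E s par v) = set (rootpath E s par x)"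
    "set (rootpath E s par v) \<inter> set (rootpath E s par x) = set (rootpath E s par x)"
    using tanc_trans[OF v a] unfolding tanc_def by blast+
  have deepest: "w \<in> set (rootpath E s par x) \<and> (\<forall>w' \<in> set (rootpath E s par x). depth w' \<le> depth w)
      \<longleftrightarrow> w = x" for w
  proof
    assume w: "w \<in> set (rootpath E s par x) \<and> (\<forall>w' \<in> set (rootpath E s par x). depth w' \<le> depth w)"
    then have "depth x \<le> depth w"
      using tanc_refl unfolding tanc_def by blast
    moreover have "tanc E s par w x"
      using w unfolding tanc_def by simp
    ultimately show "w = x"
      using depth_less_if_proper_tanc[OF x] by fastforce
  next
    assume "w = x"
    then show "w \<in> set (rootpath E s par x) \<and> (\<forall>w' \<in> set (rootpath E s par x). depth w' \<le> depth w)"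
      using tanc_refl tancD(2)[OF x] unfolding tanc_def by blast
  qed
  show "lca E s par x v = x" "lca E s par v x = x"
    unfolding lca_def common deepest by simp_all
qed

lemma take_rootpath:
  "m \<le> depth v \<Longrightarrow> take (Suc m) (rootpath E s par v) = map (\<lambda>i. (par ^^ i) v) [0..<Suc m]"
  unfolding rootpath_def by (simp del: upt_Suc add: take_map take_upt)

lemma tpath_from_ancestor:
  assumes v: "v \<in> V" and a: "tanc E s par x v"
  shows "tpath E s par x v = rev (map (\<lambda>i. (par ^^ i) v) [0..<Suc (depth v - depth x)])"
proof -
  have x: "depth x \<le> depth v" "x = (par ^^ (depth v - depth x)) v"
    using tancD[OF v a] by auto
  have "take (depth x - depth x + 1) (rootpath E s par x) = [x]"
    using take_rootpath[of 0 x] by simp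
  moreover have "take (depth v - depth x + 1) (rootpath E s par v)
      = map (\<lambda>i. (par ^^ i) v) [0..<Suc (depth v - depth x)]"
    using take_rootpath[of "depth v - depth x" v] by simp
  ultimately show ?thesis
    unfolding tpath_def Let_def lca_of_tanc(1)[OF v a] using x(2) by simp
qed

lemma tpath_to_ancestor:
  assumes u: "u \<in> V" and a: "tanc E s par y u"
  shows "tpath E s par u y = map (\<lambda>i. (par ^^ i) u) [0..<Suc (depth u - depth y)]"
proof -
  have "take (depth y - depth y + 1) (rootpath E s par y) = [y]"
    using take_rootpath[of 0 y] by simp
  moreover have "take (depth u - depth y + 1) (rootpath E s par u)
      = map (\<lambda>i. (par ^^ i) u) [0..<Suc (depth u - depth y)]"
    using take_rootpath[of "depth u - depth y" u] by simp
  ultimately show ?thesis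
    unfolding tpath_def Let_def lca_of_tanc(2)[OF u a] by simp
qed

lemma length_tpath_le: "length (tpath E s par u v) \<le> Suc (depth u) + depth v"
  unfolding tpath_def Let_def by (simp add: length_rootpath)

lemma walk_funpow_par:
  assumes v: "v \<in> V" and i: "i \<le> depth v"
  shows "walk E (map (\<lambda>k. (par ^^ k) v) [0..<Suc i])"
  unfolding walk_iff_edges_of edges_of_map_upt
proof (intro conjI subsetI)
  fix e assume "e \<in> {{(par ^^ k) v, (par ^^ Suc k) v} | k. k < i}"
  then obtain k where k: "k < i" "e = {(par ^^ k) v, par ((par ^^ k) v)}"
    by auto
  have "(par ^^ k) v \<in> V" "(par ^^ k) v \<noteq> s"
    using funpow_par[OF v, of k] funpow_par_neq_root[OF v, of k] k(1) i by auto
  then show "e \<in> E"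
    using bfs_parent k(2) by blast
qed simp

lemma funpow_par_in_strict_subtree:
  assumes v: "v \<in> V" and a: "tanc E s par x v" and i: "i < depth v - depth x"
  shows "(par ^^ i) v \<in> strict_subtree V E s par x"
proof -
  have x: "x = (par ^^ (depth v - depth x)) v"
    using tancD[OF v a] by simp
  have w: "(par ^^ i) v \<in> V" "depth ((par ^^ i) v) = depth v - i"
    using funpow_par[OF v, of i] i by auto
  have "depth v - depth x = (depth v - depth x - i) + i"
    using i by simp
  then have "x = (par ^^ (depth v - depth x - i)) ((par ^^ i) v)"
    using x by (metis funpow_add comp_apply)
  then have "tanc E s par x ((par ^^ i) v)"
    unfolding tanc_iff using w(2) by (intro exI[of _ "depth v - depth x - i"]) auto
  moreover have "(par ^^ i) v \<noteq> x"
    using w(2) i by auto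
  ultimately show ?thesis
    unfolding strict_subtree_def subtree_def using w(1) by simp
qed

lemma conn_in_strict_subtree_funpow_par:
  assumes v: "v \<in> V" and a: "tanc E s par x v" and i: "i < depth v - depth x"
  shows "conn_in E (strict_subtree V E s par x) v ((par ^^ i) v)"
  unfolding conn_in_def
proof (intro exI conjI)
  show "walk E (map (\<lambda>k. (par ^^ k) v) [0..<Suc i])"
    using walk_funpow_par[OF v] i by simp
  show "set (map (\<lambda>k. (par ^^ k) v) [0..<Suc i]) \<subseteq> strict_subtree V E s par x"
    using funpow_par_in_strict_subtree[OF v a] i by (auto simp del: upt_Suc)
qed (simp_all del: upt_Suc add: hd_map last_map)

lemma finite_subtree: "finite (subtree V E s par x)"
  unfolding subtree_def using finite_V by simp

lemma subtree_subset_par: "v \<in> V \<Longrightarrow> v \<noteq> s \<Longrightarrow> subtree V E s par v \<subseteq> subtree V E s par (par v)"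
  unfolding subtree_def using tanc_par tanc_trans by blast

definition child_toward :: "'a \<Rightarrow> 'a \<Rightarrow> 'a" where
  "child_toward y a = (par ^^ (depth a - depth y - 1)) a"

lemma par_child_toward:
  assumes a: "a \<in> V" and y: "tanc E s par y a" "y \<noteq> a"
  shows "par (child_toward y a) = y"
proof -
  have "depth a - depth y = Suc (depth a - depth y - 1)"
    using depth_less_if_proper_tanc[OF a y] by simp
  then show ?thesis
    using tancD(3)[OF a y(1)] unfolding child_toward_def by (metis funpow.simps(2) comp_apply)
qed

lemma child_toward:
  assumes a: "a \<in> V" and y: "tanc E s par y a" "y \<noteq> a"
  shows "child_toward y a \<in> children V s par y" "tanc E s par (child_toward y a) a"
proof -
  have k: "depth a - depth y - 1 < depth a"
    using depth_less_if_proper_tanc[OF a y] by simp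
  then have "child_toward y a \<in> V" "child_toward y a \<noteq> s"
    using funpow_par[OF a] funpow_par_neq_root[OF a] unfolding child_toward_def by auto
  then show "child_toward y a \<in> children V s par y"
    unfolding children_def using par_child_toward[OF a y] by simp
  show "tanc E s par (child_toward y a) a"
    unfolding tanc_iff child_toward_def using k by (intro exI[of _ "depth a - depth y - 1"]) simp
qed

lemma child_toward_edge:
  assumes a: "a \<in> V" and y: "tanc E s par y a" "y \<noteq> a"
  shows "{y, child_toward y a} \<in> edges_of (tpath E s par s a)"
proof -
  let ?k = "depth a - depth y - 1"
  have "?k < depth a"
    using depth_less_if_proper_tanc[OF a y] by simp
  then have "{(par ^^ ?k) a, par ((par ^^ ?k) a)} \<in> edges_of (map (\<lambda>i. (par ^^ i) a) [0..<Suc (depth a)])"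
    unfolding edges_of_map_upt by auto
  then have "{child_toward y a, y} \<in> edges_of (map (\<lambda>i. (par ^^ i) a) [0..<Suc (depth a)])"
    using par_child_toward[OF a y] unfolding child_toward_def by simp
  then show ?thesis
    using tpath_from_ancestor[OF a tanc_root[OF a]] by (simp del: upt_Suc add: insert_commute)
qed

lemma child_toward_descendant:
  assumes u: "u \<in> V" and a: "tanc E s par a u" and y: "tanc E s par y a" "y \<noteq> a"
  shows "child_toward y a = child_toward y u"
proof -
  have aV: "a \<in> V" and "a = (par ^^ (depth u - depth a)) u" "depth a \<le> depth u"
    using tancD[OF u a] by auto
  moreover have "depth y < depth a"
    using depth_less_if_proper_tanc[OF aV y] .
  ultimately have "depth u - depth y - 1 = (depth a - depth y - 1) + (depth u - depth a)"
    by simp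
  then show ?thesis
    unfolding child_toward_def using \<open>a = (par ^^ (depth u - depth a)) u\<close> by (metis funpow_add comp_apply)
qed

definition light_ancestors :: "'a \<Rightarrow> 'a set" where
  "light_ancestors a = {y. tanc E s par y a \<and> y \<noteq> a \<and> y \<noteq> s \<and>
     2 * card (subtree V E s par (child_toward y a)) < card (subtree V E s par y)}"

lemma finite_light_ancestors: "finite (light_ancestors a)"
proof (rule finite_subset)
  show "light_ancestors a \<subseteq> set (rootpath E s par a)"
    unfolding light_ancestors_def tanc_def by blast
qed simp

lemma light_ancestors_subset_doublings:
  assumes a: "a \<in> V"
  shows "light_ancestors a \<subseteq> (\<lambda>j. (par ^^ Suc j) a) `
    {j. j < depth a \<and> 2 * card (subtree V E s par ((par ^^ j) a)) < card (subtree V E s par ((par ^^ Suc j) a))}"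
    (is "_ \<subseteq> ?f ` ?J")
proof
  fix y assume y: "y \<in> light_ancestors a"
  then have ya: "tanc E s par y a" "y \<noteq> a"
    unfolding light_ancestors_def by auto
  let ?j = "depth a - depth y - 1"
  have "y = (par ^^ Suc ?j) a"
    using par_child_toward[OF a ya] unfolding child_toward_def by simp
  moreover have "?j \<in> ?J"
    using y depth_less_if_proper_tanc[OF a ya] par_child_toward[OF a ya]
    unfolding light_ancestors_def child_toward_def by auto
  ultimately show "y \<in> ?f ` ?J"
    by (rule rev_image_eqI[rotated])
qed

text \<open>Subtree sizes at least double at every light ancestor, so there are at most log n of them.\<close>
lemma card_light_ancestors_le:
  assumes a: "a \<in> V"
  shows "real (card (light_ancestors a)) \<le> log 2 (real (card V))"
proof -
  define f where "f j = card (subtree V E s par ((par ^^ j) a))" for j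
  define J where "J = {j. j < depth a \<and> 2 * f j < f (Suc j)}"
  have "finite J"
    unfolding J_def by simp
  then have "card (light_ancestors a) \<le> card ((\<lambda>j. (par ^^ Suc j) a) ` J)"
    using light_ancestors_subset_doublings[OF a] unfolding J_def f_def by (intro card_mono) simp_all
  also have "\<dots> \<le> card J"
    using \<open>finite J\<close> by (rule card_image_le)
  finally have card_le_J: "card (light_ancestors a) \<le> card J" .
  have "a \<in> subtree V E s par a"
    unfolding subtree_def using a tanc_refl by simp
  then have "1 \<le> f 0"
    using finite_subtree[of a] unfolding f_def by (auto simp: Suc_le_eq card_gt_0_iff)
  have "f j \<le> f (Suc j)" if "j < depth a" for j
    using subtree_subset_par funpow_par[OF a, of j] funpow_par_neq_root[OF a that] that finite_subtree
    unfolding f_def by (simp add: card_mono)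
  then have "2 ^ card J * f 0 \<le> f (depth a)"
    unfolding J_def by (rule card_doublings_le)
  also have "f (depth a) \<le> card V"
    unfolding f_def subtree_def using finite_V by (simp add: card_mono)
  finally have "2 ^ card J * f 0 \<le> card V" .
  then have "2 ^ card J \<le> card V"
    using \<open>1 \<le> f 0\<close> by (metis le_trans mult.right_neutral mult_le_mono2)
  then have "real (card J) \<le> log 2 (real (card V))"
    by (rule le_log2_of_power)
  with card_le_J show ?thesis
    by linarith
qed

lemma card_subtree_light_child:
  assumes heavy: "heavy_child_fun V E s par h" and y: "y \<in> V"
    and c: "c \<in> children V s par y" and light: "c \<noteq> h y"
  shows "2 * card (subtree V E s par c) < card (subtree V E s par y)"
proof -
  have hy: "h y \<in> children V s par y" "card (subtree V E s par c) \<le> card (subtree V E s par (h y))"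
    using heavy y c unfolding heavy_child_fun_def by blast+
  have child: "z \<in> V" "z \<noteq> s" "par z = y" "depth z = Suc (depth y)" if "z \<in> children V s par y" for z
    using that bfs_parent unfolding children_def by auto
  have below: "subtree V E s par z \<subseteq> subtree V E s par y - {y}" if "z \<in> children V s par y" for z
  proof
    fix w assume w: "w \<in> subtree V E s par z"
    then have wV: "w \<in> V" "tanc E s par z w"
      unfolding subtree_def by auto
    have "tanc E s par y w"
      using tanc_trans[OF wV] tanc_par[of z] child[OF that] by simp
    moreover have "w \<noteq> y"
      using tancD(2)[OF wV] child[OF that] by auto
    ultimately show "w \<in> subtree V E s par y - {y}"
      using wV unfolding subtree_def by simp
  qed
  have disjoint: "subtree V E s par c \<inter> subtree V E s par (h y) = {}"
  proof (rule ccontr)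
    assume "subtree V E s par c \<inter> subtree V E s par (h y) \<noteq> {}"
    then obtain w where w: "w \<in> V" "tanc E s par c w" "tanc E s par (h y) w"
      unfolding subtree_def by auto
    have "depth c = depth (h y)"
      using child c hy(1) by simp
    then show False
      using tancD(3)[OF w(1,2)] tancD(3)[OF w(1,3)] light by simp
  qed
  have "card (subtree V E s par c) + card (subtree V E s par (h y))
      = card (subtree V E s par c \<union> subtree V E s par (h y))"
    using disjoint finite_subtree by (simp add: card_Un_disjoint)
  also have "\<dots> \<le> card (subtree V E s par y - {y})"
    using below[OF c] below[OF hy(1)] finite_subtree by (intro card_mono) auto
  also have "\<dots> < card (subtree V E s par y)"
    using y tanc_refl finite_subtree unfolding subtree_def by (intro psubset_card_mono) auto
  finally show ?thesis
    using hy(2) by linarith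
qed

lemma children_subset_strict_subtree: "children V s par y \<subseteq> strict_subtree V E s par y"
proof
  fix c assume c: "c \<in> children V s par y"
  then have "c \<in> V" "c \<noteq> s" "par c = y"
    unfolding children_def by auto
  moreover have "c \<noteq> y"
    using bfs_parent calculation by force
  ultimately show "c \<in> strict_subtree V E s par y"
    unfolding strict_subtree_def subtree_def using tanc_par by auto
qed

end

locale light_pair_setting = bfs_setting V E s par
  for V :: "'a set" and E s par +
  fixes h :: "'a \<Rightarrow> 'a" and uC vC :: "'a \<Rightarrow> 'a set \<Rightarrow> 'a" and Csel :: "'a \<Rightarrow> 'a \<Rightarrow> 'a set"
  assumes heavy: "heavy_child_fun V E s par h"
    and comp_edges: "comp_edges V E s par uC vC"
    and choice: "light_choice V E s par h uC vC Csel"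
begin

abbreviation outer_end :: "'a \<Rightarrow> 'a \<Rightarrow> 'a" where
  "outer_end x y \<equiv> uC x (Csel x y)"

abbreviation inner_end :: "'a \<Rightarrow> 'a \<Rightarrow> 'a" where
  "inner_end x y \<equiv> vC x (Csel x y)"

lemma comp_edge_ends:
  assumes "x \<in> V" "x \<noteq> s" "C \<in> comps V E s par x"
  shows "uC x C \<in> V" "vC x C \<in> C"
  using comp_edges assms unfolding comp_edges_def by blast+

lemma length_piC_le:
  assumes "x \<in> V" "x \<noteq> s" "C \<in> comps V E s par x"
  shows "length (piC E s par uC vC x C) \<le> diameter V E + 2"
proof -
  have "length (piC E s par uC vC x C) \<le> depth (uC x C) + 2"
    unfolding piC_def using length_tpath_le[of s] by simp
  then show ?thesis
    using depth_le_diameter[OF comp_edge_ends(1)[OF assms]] by simp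
qed

lemma ordered_light_pairD:
  assumes "ordered_light_pair V E s par h uC vC x y"
  shows "x \<in> V" "y \<in> V" "x \<noteq> s" "y \<noteq> s" "\<not> tanc E s par x y"
    and "fully_sensitive V E s par uC vC x y (Csel x y)"
    and "\<not> heavy_edge_on V s par h y (piC E s par uC vC x (Csel x y))"
proof -
  have xy: "x \<in> V" "y \<in> V" "independent E s par x y"
    using assms unfolding ordered_light_pair_def by auto
  then show "x \<in> V" "y \<in> V" "x \<noteq> s" "y \<noteq> s" "\<not> tanc E s par x y"
    using tanc_root unfolding independent_def by auto
  show "fully_sensitive V E s par uC vC x y (Csel x y)"
    "\<not> heavy_edge_on V s par h y (piC E s par uC vC x (Csel x y))"
    using choice assms unfolding light_choice_def by auto
qed

lemma light_pair_inner_end: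
  assumes "ordered_light_pair V E s par h uC vC x y"
  shows "inner_end x y \<in> strict_subtree V E s par x" "Csel x y = comp_of V E s par x (inner_end x y)"
proof -
  have C: "Csel x y \<in> comps V E s par x"
    using ordered_light_pairD(6)[OF assms] unfolding fully_sensitive_def by simp
  then have "inner_end x y \<in> Csel x y"
    using comp_edge_ends(2) ordered_light_pairD(1,3)[OF assms] by blast
  then show "inner_end x y \<in> strict_subtree V E s par x" "Csel x y = comp_of V E s par x (inner_end x y)"
    using comps_eq_comp_of[OF C] by simp_all
qed

lemma light_pair_outer_end:
  assumes "ordered_light_pair V E s par h uC vC x y"
  shows "outer_end x y \<in> V" "tanc E s par y (outer_end x y)"
proof -
  have C: "Csel x y \<in> comps V E s par x"
    using ordered_light_pairD(6)[OF assms] unfolding fully_sensitive_def by simp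
  then show u: "outer_end x y \<in> V"
    using comp_edge_ends(1) ordered_light_pairD(1,3)[OF assms] by blast
  have "y \<in> set (tpath E s par s (outer_end x y) @ [inner_end x y])"
    using ordered_light_pairD(6)[OF assms] unfolding fully_sensitive_def piC_def by simp
  moreover have "y \<noteq> inner_end x y"
    using light_pair_inner_end(1)[OF assms] ordered_light_pairD(5)[OF assms]
    unfolding strict_subtree_def subtree_def by auto
  ultimately show "tanc E s par y (outer_end x y)"
    using tpath_from_ancestor[OF u tanc_root[OF u]] unfolding tanc_def rootpath_def by simp
qed

lemma light_path_eq:
  assumes "ordered_light_pair V E s par h uC vC x y"
  shows "light_path E s par uC vC Csel x y =
    rev (map (\<lambda>i. (par ^^ i) (inner_end x y)) [0..<Suc (depth (inner_end x y) - depth x)]) @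
    map (\<lambda>i. (par ^^ i) (outer_end x y)) [0..<Suc (depth (outer_end x y) - depth y)]"
proof -
  have "inner_end x y \<in> V" "tanc E s par x (inner_end x y)"
    using light_pair_inner_end(1)[OF assms] unfolding strict_subtree_def subtree_def by auto
  then show ?thesis
    unfolding light_path_def Let_def
    using tpath_from_ancestor tpath_to_ancestor light_pair_outer_end[OF assms] by simp
qed

lemma light_pair_light_child:
  assumes olp: "ordered_light_pair V E s par h uC vC x y" and y: "y \<noteq> outer_end x y"
  shows "y \<in> light_ancestors (outer_end x y)"
    "x \<in> set (piC E s par uC vC y (comp_of V E s par y (child_toward y (outer_end x y))))"
proof -
  let ?u = "outer_end x y"
  let ?c = "child_toward y ?u"
  note u = light_pair_outer_end[OF olp]
  have c: "?c \<in> children V s par y"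
    using child_toward(1)[OF u(1,2) y] .
  have "{y, ?c} \<in> edges_of (piC E s par uC vC x (Csel x y))"
    using child_toward_edge[OF u(1,2) y] edges_of_append_left unfolding piC_def by blast
  then have "?c \<noteq> h y"
    using ordered_light_pairD(7)[OF olp] c unfolding heavy_edge_on_def by auto
  then have "2 * card (subtree V E s par ?c) < card (subtree V E s par y)"
    using card_subtree_light_child[OF heavy ordered_light_pairD(2)[OF olp] c] by simp
  then show "y \<in> light_ancestors ?u"
    unfolding light_ancestors_def using u(2) y ordered_light_pairD(4)[OF olp] by simp
  show "x \<in> set (piC E s par uC vC y (comp_of V E s par y ?c))"
    using ordered_light_pairD(6)[OF olp] c \<open>{y, ?c} \<in> edges_of _\<close>
    unfolding fully_sensitive_def by blast
qed

text \<open>If a is an endpoint of an edge of Pi<x,y>, then (x, y) is in down_pairs a when the edge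
  lies on pi(x, v_C) o (v_C, u_C), and in up_pairs a when it lies on pi(u_C, y) with a as its
  lower endpoint.\<close>
definition down_pairs :: "'a \<Rightarrow> ('a \<times> 'a) set" where
  "down_pairs a = (\<Union>x \<in> {x \<in> V - {s}. a \<in> strict_subtree V E s par x}.
     {x} \<times> insert (uC x (comp_of V E s par x a)) (light_ancestors (uC x (comp_of V E s par x a))))"

definition up_pairs :: "'a \<Rightarrow> ('a \<times> 'a) set" where
  "up_pairs a = (\<Union>y \<in> light_ancestors a.
     set (piC E s par uC vC y (comp_of V E s par y (child_toward y a))) \<times> {y})"

lemma down_pairsI:
  assumes olp: "ordered_light_pair V E s par h uC vC x y"
    and a: "a \<in> strict_subtree V E s par x" "Csel x y = comp_of V E s par x a"
  shows "(x, y) \<in> down_pairs a"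
proof -
  have "y \<in> insert (outer_end x y) (light_ancestors (outer_end x y))"
    using light_pair_light_child(1)[OF olp] by blast
  then show ?thesis
    unfolding down_pairs_def using a ordered_light_pairD(1,3)[OF olp] by auto
qed

lemma up_pairsI:
  assumes olp: "ordered_light_pair V E s par h uC vC x y"
    and i: "i < depth (outer_end x y) - depth y"
  shows "(x, y) \<in> up_pairs ((par ^^ i) (outer_end x y))"
proof -
  let ?u = "outer_end x y"
  let ?a = "(par ^^ i) ?u"
  note u = light_pair_outer_end[OF olp]
  have a: "?a \<in> V" "depth ?a = depth ?u - i"
    using funpow_par[OF u(1), of i] i by auto
  have "tanc E s par ?a ?u"
    unfolding tanc_iff using i by (intro exI[of _ i]) auto
  moreover have ya: "tanc E s par y ?a" "y \<noteq> ?a"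
  proof -
    have "depth ?u - depth y = (depth ?u - depth y - i) + i"
      using i by simp
    then have "y = (par ^^ (depth ?u - depth y - i)) ?a"
      using tancD(3)[OF u] by (metis funpow_add comp_apply)
    then show "tanc E s par y ?a"
      unfolding tanc_iff using a(2) by (intro exI[of _ "depth ?u - depth y - i"]) auto
    show "y \<noteq> ?a"
      using a(2) i by auto
  qed
  ultimately have same_child: "child_toward y ?a = child_toward y ?u"
    using child_toward_descendant[OF u(1)] by blast
  have "y \<noteq> ?u"
    using i by auto
  then have "y \<in> light_ancestors ?a"
    using light_pair_light_child(1)[OF olp] ya same_child unfolding light_ancestors_def by auto
  moreover have "x \<in> set (piC E s par uC vC y (comp_of V E s par y (child_toward y ?a)))"
    using light_pair_light_child(2)[OF olp \<open>y \<noteq> ?u\<close>] same_child by simp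
  ultimately show ?thesis
    unfolding up_pairs_def by blast
qed

lemma light_path_edge_endpoint:
  assumes olp: "ordered_light_pair V E s par h uC vC x y"
    and e: "e \<in> edges_of (light_path E s par uC vC Csel x y)"
  obtains a where "a \<in> e" "(x, y) \<in> down_pairs a \<union> up_pairs a"
proof -
  let ?u = "outer_end x y" and ?v = "inner_end x y"
  note v = light_pair_inner_end[OF olp]
  have vV: "?v \<in> V" and xv: "tanc E s par x ?v"
    using v(1) unfolding strict_subtree_def subtree_def by auto
  from e[unfolded light_path_eq[OF olp]] show thesis
  proof (rule edges_of_appendE)
    assume "e \<in> edges_of (rev (map (\<lambda>i. (par ^^ i) ?v) [0..<Suc (depth ?v - depth x)]))"
    then obtain i where i: "i < depth ?v - depth x" "e = {(par ^^ i) ?v, (par ^^ Suc i) ?v}"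
      unfolding edges_of_rev edges_of_map_upt by blast
    have "Csel x y = comp_of V E s par x ((par ^^ i) ?v)"
      using v(2) conn_in_same_component[OF conn_in_strict_subtree_funpow_par[OF vV xv i(1)]]
      unfolding comp_of_def by simp
    then have "(x, y) \<in> down_pairs ((par ^^ i) ?v)"
      using down_pairsI[OF olp] funpow_par_in_strict_subtree[OF vV xv i(1)] by blast
    then show thesis
      using that i(2) by blast
  next
    assume "e \<in> edges_of (map (\<lambda>i. (par ^^ i) ?u) [0..<Suc (depth ?u - depth y)])"
    then obtain i where i: "i < depth ?u - depth y" "e = {(par ^^ i) ?u, (par ^^ Suc i) ?u}"
      unfolding edges_of_map_upt by blast
    then show thesis
      using that up_pairsI[OF olp i(1)] by blast
  next
    assume "e = {last (rev (map (\<lambda>i. (par ^^ i) ?v) [0..<Suc (depth ?v - depth x)])),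
      hd (map (\<lambda>i. (par ^^ i) ?u) [0..<Suc (depth ?u - depth y)])}"
    then have "?v \<in> e"
      by (simp del: upt_Suc add: last_rev hd_map)
    then show thesis
      using that down_pairsI[OF olp v] by blast
  qed simp_all
qed

lemma finite_down_pairs: "finite (down_pairs a)"
  unfolding down_pairs_def using finite_V finite_light_ancestors by auto

lemma finite_up_pairs: "finite (up_pairs a)"
  unfolding up_pairs_def using finite_light_ancestors by auto

lemma log_card_V_nonneg: "0 \<le> log 2 (real (card V))"
proof -
  have "0 < card V"
    using root_in_V finite_V card_gt_0_iff by blast
  then show ?thesis
    by simp
qed

lemma card_down_pairs_le:
  assumes a: "a \<in> V"
  shows "real (card (down_pairs a)) \<le> (real (diameter V E) + 1) * (1 + log 2 (real (card V)))"
proof -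
  let ?X = "{x \<in> V - {s}. a \<in> strict_subtree V E s par x}"
  have "card ?X \<le> card (set (rootpath E s par a))"
    unfolding strict_subtree_def subtree_def tanc_def by (intro card_mono) auto
  also have "\<dots> \<le> Suc (depth a)"
    using card_length[of "rootpath E s par a"] length_rootpath by simp
  also have "\<dots> \<le> Suc (diameter V E)"
    using depth_le_diameter[OF a] by simp
  finally have X: "real (card ?X) \<le> real (diameter V E) + 1"
    by simp
  have "real (card ({x} \<times> insert (uC x (comp_of V E s par x a)) (light_ancestors (uC x (comp_of V E s par x a)))))
      \<le> 1 + log 2 (real (card V))" if x: "x \<in> ?X" for x
  proof -
    let ?u = "uC x (comp_of V E s par x a)"
    have "?u \<in> V"
      using x by (intro comp_edge_ends(1) comp_of_in_comps) auto
    have "card (insert ?u (light_ancestors ?u)) \<le> Suc (card (light_ancestors ?u))"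
      by (simp add: card_insert_if finite_light_ancestors)
    then have "real (card (insert ?u (light_ancestors ?u))) \<le> 1 + real (card (light_ancestors ?u))"
      by (metis of_nat_Suc of_nat_mono add.commute)
    with card_light_ancestors_le[OF \<open>?u \<in> V\<close>]
    have "real (card (insert ?u (light_ancestors ?u))) \<le> 1 + log 2 (real (card V))"
      by linarith
    then show ?thesis
      by (simp only: card_cartesian_product_singleton)
  qed
  then have "real (card (down_pairs a)) \<le> real (card ?X) * (1 + log 2 (real (card V)))"
    unfolding down_pairs_def by (rule card_UN_le_mult[rotated]) (auto intro: rev_finite_subset[OF finite_V])
  also have "\<dots> \<le> (real (diameter V E) + 1) * (1 + log 2 (real (card V)))"
    using X log_card_V_nonneg by (intro mult_right_mono) auto
  finally show ?thesis .
qed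

lemma card_up_pairs_le:
  assumes a: "a \<in> V"
  shows "real (card (up_pairs a)) \<le> log 2 (real (card V)) * (real (diameter V E) + 2)"
proof -
  have "real (card (set (piC E s par uC vC y (comp_of V E s par y (child_toward y a))) \<times> {y}))
      \<le> real (diameter V E) + 2" if y: "y \<in> light_ancestors a" for y
  proof -
    have ya: "tanc E s par y a" "y \<noteq> a" "y \<noteq> s"
      using y unfolding light_ancestors_def by auto
    have "child_toward y a \<in> strict_subtree V E s par y"
      using child_toward(1)[OF a ya(1,2)] children_subset_strict_subtree by blast
    then have "length (piC E s par uC vC y (comp_of V E s par y (child_toward y a))) \<le> diameter V E + 2"
      using tancD(1)[OF a ya(1)] ya(3) by (intro length_piC_le comp_of_in_comps) auto
    then have "card (set (piC E s par uC vC y (comp_of V E s par y (child_toward y a)))) \<le> diameter V E + 2"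
      using card_length le_trans by blast
    then have "real (card (set (piC E s par uC vC y (comp_of V E s par y (child_toward y a)))))
        \<le> real (diameter V E + 2)"
      by (rule of_nat_mono)
    then show ?thesis
      unfolding card_cartesian_product_singleton by simp
  qed
  then have "real (card (up_pairs a)) \<le> real (card (light_ancestors a)) * (real (diameter V E) + 2)"
    unfolding up_pairs_def by (intro card_UN_le_mult finite_light_ancestors)
  also have "\<dots> \<le> log 2 (real (card V)) * (real (diameter V E) + 2)"
    using card_light_ancestors_le[OF a] by (intro mult_right_mono) auto
  finally show ?thesis .
qed

lemma length_light_path_le:
  assumes olp: "ordered_light_pair V E s par h uC vC x y"
  shows "length (light_path E s par uC vC Csel x y) - 1 \<le> 5 * diameter V E"
proof -
  have "inner_end x y \<in> V"
    using light_pair_inner_end(1)[OF olp] unfolding strict_subtree_def subtree_def by simp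
  then have "depth (inner_end x y) \<le> diameter V E" "depth (outer_end x y) \<le> diameter V E"
    "depth x \<le> diameter V E" "depth y \<le> diameter V E"
    using depth_le_diameter light_pair_outer_end(1)[OF olp] ordered_light_pairD(1,2)[OF olp] by auto
  moreover have "depth x \<noteq> 0"
    using depth_eq_0_iff ordered_light_pairD(1,3)[OF olp] by blast
  moreover have "length (light_path E s par uC vC Csel x y)
      \<le> Suc (depth x) + depth (inner_end x y) + Suc (depth (outer_end x y)) + depth y"
    unfolding light_path_def Let_def length_append
    using add_mono[OF length_tpath_le[of x "inner_end x y"] length_tpath_le[of "outer_end x y" y]] by simp
  ultimately show ?thesis
    by linarith
qed

lemma card_pairs_at_vertex_le:
  assumes a: "a \<in> V"
  shows "real (card (down_pairs a \<union> up_pairs a))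
    \<le> (real (diameter V E) + 1) * (1 + log 2 (real (card V))) + log 2 (real (card V)) * (real (diameter V E) + 2)"
proof -
  have "real (card (down_pairs a \<union> up_pairs a)) \<le> real (card (down_pairs a) + card (up_pairs a))"
    by (rule of_nat_mono[OF card_Un_le])
  then show ?thesis
    using card_down_pairs_le[OF a] card_up_pairs_le[OF a] unfolding of_nat_add by linarith
qed

lemma edge_imp_card_V_ge_2:
  assumes "e \<in> E"
  shows "2 \<le> card V"
proof -
  obtain p q where "p \<in> V" "q \<in> V" "p \<noteq> q"
    using assms graph unfolding graph_def by blast
  then have "card {p, q} \<le> card V"
    using finite_V by (intro card_mono) auto
  with \<open>p \<noteq> q\<close> show ?thesis
    by simp
qed

lemma edge_imp_diameter_ge_1:
  assumes "e \<in> E"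
  shows "1 \<le> diameter V E"
proof -
  obtain w where w: "w \<in> V" "w \<noteq> s"
    using assms graph unfolding graph_def by blast
  then have "depth w \<noteq> 0"
    using depth_eq_0_iff by blast
  then show ?thesis
    using depth_le_diameter[OF w(1)] by linarith
qed

lemma card_light_pairs_through_edge_le:
  assumes e: "e \<in> E"
  shows "real (card {(x, y). ordered_light_pair V E s par h uC vC x y \<and>
                           e \<in> edges_of (light_path E s par uC vC Csel x y)})
    \<le> 14 * real (diameter V E) * log 2 (real (card V))"
proof -
  define D where "D = real (diameter V E)"
  define L where "L = log 2 (real (card V))"
  obtain p q where pq: "e = {p, q}" "p \<in> V" "q \<in> V" "p \<noteq> q"
    using e graph unfolding graph_def by blast
  have "{(x, y). ordered_light_pair V E s par h uC vC x y \<and> e \<in> edges_of (light_path E s par uC vC Csel x y)}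
      \<subseteq> (\<Union>a\<in>e. down_pairs a \<union> up_pairs a)"
    by (blast elim: light_path_edge_endpoint)
  then have "card {(x, y). ordered_light_pair V E s par h uC vC x y \<and> e \<in> edges_of (light_path E s par uC vC Csel x y)}
      \<le> card (\<Union>a\<in>e. down_pairs a \<union> up_pairs a)"
    using pq(1) finite_down_pairs finite_up_pairs by (intro card_mono) auto
  also have "real \<dots> \<le> real (card e) * ((D + 1) * (1 + L) + L * (D + 2))"
    using card_pairs_at_vertex_le pq unfolding D_def L_def by (intro card_UN_le_mult) auto
  also have "\<dots> = 4 * (D * L) + 2 * D + 6 * L + 2"
    using pq(1,4) by (simp add: algebra_simps)
  also have "\<dots> \<le> 14 * D * L"
  proof -
    have "1 \<le> D" "1 \<le> L"
      unfolding D_def L_def using edge_imp_diameter_ge_1[OF e] edge_imp_card_V_ge_2[OF e] by simp_all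
    then have "D \<le> D * L" "L \<le> D * L"
      by (simp_all add: mult_le_cancel_left1 mult_le_cancel_right1)
    with \<open>1 \<le> D\<close> show ?thesis
      unfolding mult.assoc by linarith
  qed
  finally show ?thesis
    unfolding D_def L_def by simp
qed

end

theorem lemma4p19:
  "\<exists>(c::real) (k::nat). c > 0 \<and>
     (\<forall>(V::nat set) E D s par h uC vC Csel.
        graph V E \<and> connected_graph V E \<and> no_cut_vertex V E \<and>
        D = diameter V E \<and> bfs_tree V E s par \<and> heavy_child_fun V E s par h \<and>
        comp_edges V E s par uC vC \<and> light_choice V E s par h uC vC Csel \<longrightarrow>
        (\<forall>x y. ordered_light_pair V E s par h uC vC x y \<longrightarrow>
           real (length (light_path E s par uC vC Csel x y) - 1) \<le> c * real D) \<and>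
        (\<forall>e\<in>E. real (card {(x, y). ordered_light_pair V E s par h uC vC x y \<and>
                                  e \<in> edges_of (light_path E s par uC vC Csel x y)})
                \<le> c * real D * (log 2 (real (card V))) ^ k))"
proof (intro exI[of _ "14::real"] exI[of _ "1::nat"] conjI allI impI ballI, goal_cases)
  case 1
  then show ?case by simp
next
  case (2 V E D s par h uC vC Csel x y)
  then interpret light_pair_setting V E s par h uC vC Csel
    by unfold_locales auto
  have "real (length (light_path E s par uC vC Csel x y) - 1) \<le> real (5 * diameter V E)"
    using length_light_path_le[OF 2(2)] by (rule of_nat_mono)
  then show ?case
    using 2(1) by simp
next
  case (3 V E D s par h uC vC Csel e)
  then interpret light_pair_setting V E s par h uC vC Csel
    by unfold_locales auto
  show ?case
    using card_light_pairs_through_edge_le[OF 3(2)] 3(1) by simp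
qed

end
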